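(* For every positive integer $s$, $$\sum_{n\ge0}z^n\sum_{j=0}^{n+1}(-1)^{n+1-j}\binom{2n+1}{n+1-j}j^{2s}=\frac12\left(1+\sqrt{1+4z}\right)\left(1+p_s(z)\right)$$ as formal power series, where $p_s(z)$ is a polynomial in $z$ with integer coefficients, all of which are divisible by $3$, and $p_s(0)=0$.
   Context: $\sqrt{1+4z}$ denotes the formal power series square root with constant term $1$. *)

theory Defs
  imports "HOL-Computational_Algebra.Computational_Algebra"
begin

text \<open>The formal power series square root of 1+4z with constant term 1,
  via the library's formal radical (root function choosing constant term 1).\<close>
definition sqrt_1p4z :: "rat fps" where
  "sqrt_1p4z = fps_radical (\<lambda>_ _. 1) 2 (1 + 4 * fps_X)"

end

theory Submission
  imports Defs
begin

text \<open>Write T(n, f) = \<Sum> (-1)^m C(2n+1, m) f(n+1-m), summed over m = 0..n+1, so that the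
  n-th coefficient on the left is T(n, x^(2s)). Pascal's rule expresses T(n, f) as T(n-1, D f),
  where D f(x) = f(x+1) - 2f(x) + f(x-1), up to boundary terms at 0 and -1. The polynomials
  Q_k(x) = x (x-k)(x-k+1)...(x+k) / ((k+1) (2k+1)!) satisfy D Q_k = Q_(k-1) and vanish at 0 and,
  for k \<ge> 1, at -1; hence T(n, Q_k) = T(n-k, x^2). Expanding x^(2s) = \<Sum> c_k Q_k therefore
  factors the series as (\<Sum> c_k z^k) (\<Sum> T(n, x^2) z^n). The second factor is (1 + \<surd>(1+4z))/2,
  because T(n+1, x^2) is a signed Catalan number. The coefficients c_k obey the recursion coming
  from x^2 Q_k = (k+1)^2 Q_k + 2(k+2)(2k+3) Q_(k+1), which gives c_0 = 1 and 3 | c_k for k \<ge> 1.\<close>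

lemma Suc_times_binomial_double_Suc: "(m+1) * (2*m choose (m+1)) = m * (2*m choose m)"
proof -
  have "Suc m * (2*m choose Suc m) = (2*m) * ((2*m - 1) choose m)"
    by (rule binomial_absorption)
  also have "\<dots> = (2*m - m) * (2*m choose m)"
    by (rule binomial_absorb_comp[symmetric])
  finally show ?thesis by simp
qed

lemma Suc_times_central_binomial_Suc:
  "(m+1) * ((2*m+2) choose (m+1)) = 2*(2*m+1) * (2*m choose m)"
proof -
  have "(m+1) * ((2*m+2) choose (m+1)) = (2*m+2) * ((2*m+1) choose m)"
    using Suc_times_binomial[of m "2*m+1"] by simp
  also have "(2*m+1) choose m = (2*m+1) choose (m+1)"
    using binomial_symmetric[of "m+1" "2*m+1"] by simp
  finally have "(m+1) * ((m+1) * ((2*m+2) choose (m+1))) =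
      (2*m+2) * ((m+1) * ((2*m+1) choose (m+1)))"
    by (simp add: algebra_simps)
  also have "(m+1) * ((2*m+1) choose (m+1)) = (2*m+1) * (2*m choose m)"
    using Suc_times_binomial[of m "2*m"] by simp
  finally have "(m+1) * ((m+1) * ((2*m+2) choose (m+1))) = (m+1) * (2*(2*m+1) * (2*m choose m))"
    by (simp add: algebra_simps)
  then show ?thesis by (subst (asm) mult_left_cancel) simp_all
qed

definition alt_binom_sum :: "nat \<Rightarrow> nat \<Rightarrow> ('a::comm_ring_1 \<Rightarrow> 'a) \<Rightarrow> 'a" where
  "alt_binom_sum a r f = (\<Sum>m\<le>r. (-1)^m * of_nat (a choose m) * f (of_nat r - of_nat m))"

lemma alt_binom_sum_Suc_right:
  "alt_binom_sum a (Suc r) f =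
     alt_binom_sum a r (\<lambda>x. f (x+1)) + (-1)^(Suc r) * of_nat (a choose Suc r) * f 0"
  unfolding alt_binom_sum_def by (simp add: algebra_simps)

lemma alt_binom_sum_Suc_Suc:
  "alt_binom_sum (Suc a) (Suc r) f = alt_binom_sum a (Suc r) f - alt_binom_sum a r f"
proof -
  have "alt_binom_sum (Suc a) (Suc r) f = f (of_nat (Suc r)) +
     (\<Sum>m\<le>r. (-1)^Suc m * of_nat (a choose Suc m) * f (of_nat r - of_nat m))
   + (\<Sum>m\<le>r. (-1)^Suc m * of_nat (a choose m) * f (of_nat r - of_nat m))"
    unfolding alt_binom_sum_def
    by (subst sum.atMost_Suc_shift) (simp add: algebra_simps sum.distrib[symmetric])
  also have "f (of_nat (Suc r)) +
     (\<Sum>m\<le>r. (-1)^Suc m * of_nat (a choose Suc m) * f (of_nat r - of_nat m)) =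
     alt_binom_sum a (Suc r) f"
    unfolding alt_binom_sum_def by (subst sum.atMost_Suc_shift) simp
  also have "(\<Sum>m\<le>r. (-1)^Suc m * of_nat (a choose m) * f (of_nat r - of_nat m)) =
     - alt_binom_sum a r f"
    unfolding alt_binom_sum_def by (simp add: sum_negf[symmetric])
  finally show ?thesis by simp
qed

lemma alt_binom_sum_add:
  "alt_binom_sum a r (\<lambda>x. f x + g x) = alt_binom_sum a r f + alt_binom_sum a r g"
  unfolding alt_binom_sum_def by (simp add: algebra_simps sum.distrib)

lemma alt_binom_sum_diff:
  "alt_binom_sum a r (\<lambda>x. f x - g x) = alt_binom_sum a r f - alt_binom_sum a r g"
  unfolding alt_binom_sum_def by (simp add: algebra_simps sum_subtractf)

lemma alt_binom_sum_cmult: "alt_binom_sum a r (\<lambda>x. c * f x) = c * alt_binom_sum a r f"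
  unfolding alt_binom_sum_def by (simp add: algebra_simps sum_distrib_left)

lemma alt_binom_sum_sum:
  "finite K \<Longrightarrow>
     alt_binom_sum a r (\<lambda>x. \<Sum>k\<in>K. c k * g k x) = (\<Sum>k\<in>K. c k * alt_binom_sum a r (g k))"
  unfolding alt_binom_sum_def sum_distrib_left by (subst sum.swap) (simp add: algebra_simps)

lemma alt_binom_sum_const:
  "alt_binom_sum (Suc a) r (\<lambda>_. c) = c * (-1)^r * of_nat (a choose r)"
proof (induction r)
  case 0
  then show ?case by (simp add: alt_binom_sum_def)
next
  case (Suc r)
  then show ?case
    using alt_binom_sum_Suc_right[of "Suc a" r "\<lambda>_. c"] by (simp add: algebra_simps)
qed

lemma alt_binom_sum_second_difference:
  assumes "f 0 = 0"
  shows "alt_binom_sum (a+2) (r+2) f =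
     alt_binom_sum a (r+1) (\<lambda>x. f (x+1) - 2 * f x + f (x-1))
       - (-1)^(r+1) * of_nat (a choose (r+1)) * f (-1)"
proof -
  have "alt_binom_sum (a+2) (r+2) f =
      alt_binom_sum a (r+2) f - 2 * alt_binom_sum a (r+1) f + alt_binom_sum a r f"
    using alt_binom_sum_Suc_Suc[of "Suc a" "Suc r" f] alt_binom_sum_Suc_Suc[of a "Suc r" f]
      alt_binom_sum_Suc_Suc[of a r f]
    by (simp add: algebra_simps)
  moreover have "alt_binom_sum a (r+2) f = alt_binom_sum a (r+1) (\<lambda>x. f (x+1))"
    using alt_binom_sum_Suc_right[of a "r+1" f] assms by simp
  moreover have "alt_binom_sum a (r+1) (\<lambda>x. f (x-1)) =
      alt_binom_sum a r f + (-1)^(r+1) * of_nat (a choose (r+1)) * f (-1)"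
    using alt_binom_sum_Suc_right[of a r "\<lambda>x. f (x-1)"] by simp
  ultimately show ?thesis
    by (simp add: alt_binom_sum_add alt_binom_sum_diff alt_binom_sum_cmult)
qed

lemma alt_binom_sum_eq_int_sum:
  "alt_binom_sum (2*n+1) (n+1) (\<lambda>x::'a::comm_ring_1. x^e) =
     of_int (\<Sum>j=0..n+1. (-1) ^ (n + 1 - j) * int ((2*n+1) choose (n+1-j)) * int j ^ e)"
proof -
  have "of_int (\<Sum>j=0..n+1. (-1) ^ (n + 1 - j) * int ((2*n+1) choose (n+1-j)) * int j ^ e) =
      (\<Sum>j=0..n+1. (-1) ^ (n + 1 - j) * of_nat ((2*n+1) choose (n+1-j)) * (of_nat j :: 'a) ^ e)"
    by simp
  also have "\<dots> = (\<Sum>m=0..n+1. (-1) ^ m * of_nat ((2*n+1) choose m) * (of_nat (n+1) - of_nat m) ^ e)"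
    by (subst sum.atLeastAtMost_rev) (rule sum.cong; simp add: of_nat_diff)
  finally show ?thesis
    by (simp add: alt_binom_sum_def atLeast0AtMost)
qed

definition alt_square_sum :: "nat \<Rightarrow> 'a::comm_ring_1" where
  "alt_square_sum n = alt_binom_sum (2*n+1) (n+1) (\<lambda>x. x^2)"

lemma alt_square_sum_0: "alt_square_sum 0 = 1"
  by (simp add: alt_square_sum_def alt_binom_sum_def)

lemma alt_square_sum_Suc:
  "of_nat (m+1) * alt_square_sum (Suc m) = (-1)^m * of_nat (2*m choose m)"
proof -
  define P where "P = (of_nat (2*m choose (m+1)) :: 'a)"
  define B where "B = (of_nat (2*m choose m) :: 'a)"
  have "alt_square_sum (Suc m) = alt_binom_sum (2*m+1+2) (m+2) (\<lambda>x::'a. x^2)"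
    by (simp add: alt_square_sum_def eval_nat_numeral)
  also have "\<dots> = alt_binom_sum (Suc (2*m)) (m+1) (\<lambda>_. 2) - (-1)^(m+1) * of_nat ((2*m+1) choose (m+1))"
    using alt_binom_sum_second_difference[of "\<lambda>x::'a. x^2" "2*m+1" m]
    by (simp add: power2_eq_square algebra_simps)
  also have "\<dots> = (-1)^m * (P + B - 2 * P)"
    by (simp add: alt_binom_sum_const P_def B_def algebra_simps)
  finally have "of_nat (m+1) * alt_square_sum (Suc m) = of_nat (m+1) * ((-1)^m * (P + B - 2 * P))"
    by simp
  also have "\<dots> = (-1)^m * (of_nat (m+1) * B - of_nat (m+1) * P)"
    by (simp add: algebra_simps)
  also have "of_nat (m+1) * P = of_nat m * B"
    unfolding P_def B_def of_nat_mult[symmetric] Suc_times_binomial_double_Suc ..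
  finally show ?thesis by (simp add: B_def algebra_simps)
qed

definition central_basis :: "nat \<Rightarrow> 'a::field_char_0 \<Rightarrow> 'a" where
  "central_basis k x = x * pochhammer (x - of_nat k) (2*k+1) / (of_nat (k+1) * fact (2*k+1))"

lemma fact_times_central_basis:
  "of_nat (k+1) * fact (2*k+1) * central_basis k x = x * pochhammer (x - of_nat k) (2*k+1)"
  by (simp add: central_basis_def del: of_nat_Suc)

lemma central_basis_0: "central_basis 0 x = x^2"
  by (simp add: central_basis_def power2_eq_square)

lemma central_basis_at_0: "central_basis k 0 = 0"
  by (simp add: central_basis_def)

lemma central_basis_Suc_at_minus_1: "central_basis (Suc k) (-1) = 0"
proof -
  have "pochhammer (-1 - of_nat (Suc k) :: 'a) (2*Suc k+1) = pochhammer (- of_nat (k+2)) (2*Suc k+1)"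
    by (simp add: algebra_simps)
  also have "\<dots> = 0" by (rule pochhammer_of_nat_eq_0_iff[THEN iffD2]) simp
  finally show ?thesis by (simp add: central_basis_def)
qed

lemma central_basis_Suc_at_1: "central_basis (Suc k) 1 = 0"
proof -
  have "pochhammer (1 - of_nat (Suc k) :: 'a) (2*Suc k+1) = pochhammer (- of_nat k) (2*Suc k+1)"
    by (simp add: algebra_simps)
  also have "\<dots> = 0" by (rule pochhammer_of_nat_eq_0_iff[THEN iffD2]) simp
  finally show ?thesis by (simp add: central_basis_def)
qed

lemma pochhammer_centred_Suc:
  fixes x :: "'a::comm_ring_1"
  shows "pochhammer (x - of_nat (Suc k)) (2*Suc k+1) =
      (x - of_nat k - 1) * (x + of_nat k + 1) * pochhammer (x - of_nat k) (2*k+1)"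
    and "pochhammer (x + 1 - of_nat (Suc k)) (2*Suc k+1) =
      (x + of_nat k + 1) * (x + of_nat k + 2) * pochhammer (x - of_nat k) (2*k+1)"
    and "pochhammer (x - 1 - of_nat (Suc k)) (2*Suc k+1) =
      (x - of_nat k - 2) * (x - of_nat k - 1) * pochhammer (x - of_nat k) (2*k+1)"
proof -
  have e: "2*Suc k+1 = Suc (Suc (2*k+1))" by simp
  show "pochhammer (x - of_nat (Suc k)) (2*Suc k+1) =
      (x - of_nat k - 1) * (x + of_nat k + 1) * pochhammer (x - of_nat k) (2*k+1)"
    unfolding e pochhammer_rec[of _ "Suc (2*k+1)"] pochhammer_rec'[of _ "2*k+1"]
    by (simp add: algebra_simps)
  show "pochhammer (x + 1 - of_nat (Suc k)) (2*Suc k+1) =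
      (x + of_nat k + 1) * (x + of_nat k + 2) * pochhammer (x - of_nat k) (2*k+1)"
    unfolding e pochhammer_rec'[of _ "Suc (2*k+1)"] pochhammer_rec'[of _ "2*k+1"]
    by (simp add: algebra_simps)
  show "pochhammer (x - 1 - of_nat (Suc k)) (2*Suc k+1) =
      (x - of_nat k - 2) * (x - of_nat k - 1) * pochhammer (x - of_nat k) (2*k+1)"
    unfolding e pochhammer_rec[of _ "Suc (2*k+1)"] pochhammer_rec[of _ "2*k+1"]
    by (simp add: algebra_simps)
qed

lemma central_basis_denominator_Suc:
  "of_nat (Suc k + 1) * fact (2*Suc k+1) =
     (of_nat (2*(k+2)*(2*k+3)) * (of_nat (k+1) * fact (2*k+1)) :: 'a::{comm_semiring_1,semiring_char_0})"
proof -
  have "2*Suc k+1 = Suc (Suc (2*k+1))" by simp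
  then have "of_nat (Suc k + 1) * fact (2*Suc k+1) =
      (of_nat ((Suc k + 1) * (Suc (Suc (2*k+1)) * Suc (2*k+1))) * fact (2*k+1) :: 'a)"
    by (simp only: fact_Suc of_nat_mult mult.assoc)
  also have "(Suc k + 1) * (Suc (Suc (2*k+1)) * Suc (2*k+1)) = 2*(k+2)*(2*k+3) * (k+1)"
    by (simp add: algebra_simps)
  finally show ?thesis by (simp only: of_nat_mult mult.assoc)
qed

lemma central_basis_second_difference:
  "central_basis (Suc k) (x+1) - 2 * central_basis (Suc k) x + central_basis (Suc k) (x-1) =
     central_basis k x"
proof -
  define M where "M = pochhammer (x - of_nat k) (2*k+1)"
  define c where "c = (of_nat (2*(k+2)*(2*k+3)) :: 'a)"
  define d where "d = (of_nat (k+1) * fact (2*k+1) :: 'a)"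
  have Suc_k: "c * d * central_basis (Suc k) y = y * pochhammer (y - of_nat (Suc k)) (2*Suc k+1)"
    for y
    using fact_times_central_basis[of "Suc k" y] by (simp only: central_basis_denominator_Suc c_def d_def)
  have "c * d \<noteq> 0"
    by (simp only: c_def d_def mult_eq_0_iff fact_nonzero of_nat_eq_0_iff) simp
  have "c * d * (central_basis (Suc k) (x+1) - 2 * central_basis (Suc k) x
      + central_basis (Suc k) (x-1)) =
      c * d * central_basis (Suc k) (x+1) - 2 * (c * d * central_basis (Suc k) x)
      + c * d * central_basis (Suc k) (x-1)"
    by (simp add: algebra_simps)
  also have "\<dots> =
      (x+1) * ((x + of_nat k + 1) * (x + of_nat k + 2) * M)
      - 2 * (x * ((x - of_nat k - 1) * (x + of_nat k + 1) * M))
      + (x-1) * ((x - of_nat k - 2) * (x - of_nat k - 1) * M)"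
    by (simp only: Suc_k pochhammer_centred_Suc(1)[of x] pochhammer_centred_Suc(2)[of x]
        pochhammer_centred_Suc(3)[of x] M_def)
  also have "\<dots> = c * (x * M)"
    by (simp add: c_def algebra_simps)
  also have "\<dots> = c * d * central_basis k x"
    unfolding M_def d_def mult.assoc[of c "of_nat (k+1) * fact (2*k+1)"] fact_times_central_basis ..
  finally show ?thesis using \<open>c * d \<noteq> 0\<close> by simp
qed

lemma square_times_central_basis:
  "x^2 * central_basis k x =
     of_nat ((k+1)^2) * central_basis k x + of_nat (2*(k+2)*(2*k+3)) * central_basis (Suc k) x"
proof -
  define c where "c = (of_nat (2*(k+2)*(2*k+3)) :: 'a)"
  define d where "d = (of_nat (k+1) * fact (2*k+1) :: 'a)"
  have "c * d * central_basis (Suc k) x = (x^2 - of_nat ((k+1)^2)) * (d * central_basis k x)"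
    using fact_times_central_basis[of "Suc k" x] fact_times_central_basis[of k x]
    by (simp only: central_basis_denominator_Suc c_def d_def pochhammer_centred_Suc)
      (simp add: algebra_simps power2_eq_square)
  then have "d * (c * central_basis (Suc k) x) =
      d * ((x^2 - of_nat ((k+1)^2)) * central_basis k x)"
    by (simp add: algebra_simps)
  moreover have "d \<noteq> 0" by (simp only: d_def mult_eq_0_iff fact_nonzero of_nat_eq_0_iff) simp
  ultimately have "c * central_basis (Suc k) x = (x^2 - of_nat ((k+1)^2)) * central_basis k x"
    by simp
  then show ?thesis unfolding c_def[symmetric] by (simp add: algebra_simps)
qed

lemma alt_binom_sum_central_basis:
  "alt_binom_sum (2*n+1) (n+1) (central_basis k) = (if k \<le> n then alt_square_sum (n-k) else 0)"
proof (induction n arbitrary: k)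
  case 0
  then show ?case
    by (cases k) (simp_all add: alt_binom_sum_def alt_square_sum_def central_basis_0
        central_basis_at_0 central_basis_Suc_at_1)
next
  case (Suc n)
  show ?case
  proof (cases k)
    case 0
    then show ?thesis by (simp add: alt_square_sum_def central_basis_0[abs_def])
  next
    case (Suc k')
    have "alt_binom_sum (2*Suc n+1) (Suc n+1) (central_basis (Suc k')) =
        alt_binom_sum (2*n+1+2) (n+2) (central_basis (Suc k') :: 'a \<Rightarrow> 'a)"
      by (simp add: eval_nat_numeral)
    also have "\<dots> = alt_binom_sum (2*n+1) (n+1) (central_basis k')"
      using alt_binom_sum_second_difference[of "central_basis (Suc k')" "2*n+1" n]
      by (simp add: central_basis_at_0 central_basis_Suc_at_minus_1 central_basis_second_difference)
    finally show ?thesis using Suc.IH[of k'] Suc by simp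
  qed
qed

lemma sqrt_1p4z_nth_0: "sqrt_1p4z $ 0 = 1"
  by (simp add: sqrt_1p4z_def)

lemma sqrt_1p4z_squared: "sqrt_1p4z ^ 2 = 1 + 4 * fps_X"
  using power_radical[of "1 + 4 * fps_X :: rat fps" "\<lambda>_ _. 1" 1]
  by (simp add: sqrt_1p4z_def numeral_2_eq_2)

lemma sqrt_1p4z_deriv: "(1 + 4 * fps_X) * fps_deriv sqrt_1p4z = 2 * sqrt_1p4z"
proof -
  let ?R = sqrt_1p4z
  have "fps_deriv (?R ^ 2) = fps_deriv (1 + 4 * fps_X :: rat fps)"
    by (simp only: sqrt_1p4z_squared)
  then have deriv: "2 * fps_deriv ?R * ?R = 4"
    by (simp add: fps_deriv_power')
  have "2 * ((1 + 4 * fps_X) * fps_deriv ?R) = 2 * (?R^2 * fps_deriv ?R)"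
    by (simp only: sqrt_1p4z_squared)
  also have "\<dots> = ?R * (2 * fps_deriv ?R * ?R)"
    by (simp add: power2_eq_square algebra_simps)
  also have "\<dots> = 2 * (2 * ?R)"
    unfolding deriv by simp
  finally show ?thesis by (subst (asm) mult_left_cancel) simp_all
qed

lemma sqrt_1p4z_nth_rec:
  "of_nat (n+1) * sqrt_1p4z $ (n+1) = (2 - 4 * of_nat n) * sqrt_1p4z $ n"
proof -
  have "((1 + 4 * fps_X) * fps_deriv sqrt_1p4z) $ n = (2 * sqrt_1p4z) $ n"
    by (simp only: sqrt_1p4z_deriv)
  then show ?thesis
    by (cases n) (simp_all add: algebra_simps fps_deriv_nth numeral_fps_const)
qed

lemma sqrt_1p4z_nth_Suc:
  "of_nat (m+1) * sqrt_1p4z $ Suc m = 2 * (-1)^m * of_nat (2*m choose m)"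
proof (induction m)
  case 0
  then show ?case using sqrt_1p4z_nth_rec[of 0] by (simp add: sqrt_1p4z_nth_0)
next
  case (Suc m)
  define X where "X = (of_nat ((2*m+2) choose (m+1)) :: rat)"
  have "of_nat (m+2) * sqrt_1p4z $ Suc (Suc m) = (2 - 4 * of_nat (m+1)) * sqrt_1p4z $ Suc m"
    using sqrt_1p4z_nth_rec[of "Suc m"] by (simp add: add.commute)
  then have "of_nat (m+1) * (of_nat (m+2) * sqrt_1p4z $ Suc (Suc m)) =
      (2 - 4 * of_nat (m+1)) * (of_nat (m+1) * sqrt_1p4z $ Suc m)"
    by (simp only: mult.left_commute)
  also have "\<dots> = - 2 * (-1)^m * of_nat (2 * (2*m+1) * (2*m choose m))"
    unfolding Suc.IH by (simp add: algebra_simps)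
  also have "\<dots> = of_nat (m+1) * (2 * (-1)^Suc m * X)"
  proof -
    have "of_nat (2 * (2*m+1) * (2*m choose m)) = of_nat (m+1) * X"
      unfolding X_def Suc_times_central_binomial_Suc[symmetric] of_nat_mult ..
    then show ?thesis by simp
  qed
  finally have "of_nat (m+1) * (of_nat (m+2) * sqrt_1p4z $ Suc (Suc m)) =
      of_nat (m+1) * (2 * (-1)^Suc m * X)" .
  then show ?case
    unfolding X_def by (subst (asm) mult_left_cancel) (simp_all add: add.commute)
qed

lemma half_one_plus_sqrt_1p4z: "fps_const (1/2) * (1 + sqrt_1p4z) = Abs_fps alt_square_sum"
proof (rule fps_ext)
  fix n
  show "(fps_const (1/2) * (1 + sqrt_1p4z)) $ n = Abs_fps alt_square_sum $ n"
  proof (cases n)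
    case 0
    then show ?thesis by (simp add: sqrt_1p4z_nth_0 alt_square_sum_0)
  next
    case (Suc m)
    have "of_nat (m+1) * (sqrt_1p4z $ Suc m / 2) = of_nat (m+1) * alt_square_sum (Suc m)"
      using sqrt_1p4z_nth_Suc[of m] alt_square_sum_Suc[of m, where 'a=rat] by simp
    then show ?thesis using Suc by simp
  qed
qed

fun central_coeff :: "nat \<Rightarrow> nat \<Rightarrow> int" where
  "central_coeff 0 k = (if k = 0 then 1 else 0)"
| "central_coeff (Suc s) k = int ((k+1)^2) * central_coeff s k
     + (if k = 0 then 0 else int (2*(k+1)*(2*k+1)) * central_coeff s (k-1))"

lemma central_coeff_eq_0: "s < k \<Longrightarrow> central_coeff s k = 0"
  by (induction s arbitrary: k) auto

lemma central_coeff_0_right: "central_coeff s 0 = 1"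
  by (induction s) auto

lemma three_dvd_central_coeff: "k \<ge> 1 \<Longrightarrow> (3::int) dvd central_coeff s k"
proof (induction s arbitrary: k)
  case 0
  then show ?case by simp
next
  case (Suc s)
  have "3 dvd int (2*(k+1)*(2*k+1)) * central_coeff s (k-1)"
  proof (cases "k = 1")
    case True
    then show ?thesis by simp
  next
    case False
    then show ?thesis using Suc by simp
  qed
  then show ?case using Suc by simp
qed

lemma even_power_eq_sum_central_basis:
  "x^(2*(s+1)) = (\<Sum>k\<le>s. of_int (central_coeff s k) * central_basis k x)"
proof (induction s)
  case 0
  then show ?case by (simp add: central_basis_0)
next
  case (Suc s)
  let ?a = "\<lambda>k. int ((k+1)^2) * central_coeff s k"
  let ?b = "\<lambda>k. if k = 0 then 0 else int (2*(k+1)*(2*k+1)) * central_coeff s (k-1)"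
  have "x^(2*(Suc s+1)) = x^2 * x^(2*(s+1))"
    by (simp add: power_add[symmetric])
  also have "\<dots> = (\<Sum>k\<le>s. of_int (central_coeff s k) * (x^2 * central_basis k x))"
    unfolding Suc sum_distrib_left by (simp add: algebra_simps)
  also have "\<dots> = (\<Sum>k\<le>s. of_int (?a k) * central_basis k x)
      + (\<Sum>k\<le>s. of_int (central_coeff s k) * of_nat (2*(k+2)*(2*k+3)) * central_basis (Suc k) x)"
    unfolding square_times_central_basis by (simp add: algebra_simps sum.distrib)
  also have "(\<Sum>k\<le>s. of_int (?a k) * central_basis k x) =
      (\<Sum>k\<le>Suc s. of_int (?a k) * central_basis k x)"
    by (simp add: central_coeff_eq_0)
  also have "(\<Sum>k\<le>s. of_int (central_coeff s k) * of_nat (2*(k+2)*(2*k+3)) * central_basis (Suc k) x)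
      = (\<Sum>k\<le>Suc s. of_int (?b k) * central_basis k x)"
    by (subst sum.atMost_Suc_shift) (simp add: algebra_simps)
  finally show ?case
    by (simp add: sum.distrib[symmetric] algebra_simps)
qed

lemma alt_binom_sum_even_power:
  "alt_binom_sum (2*n+1) (n+1) (\<lambda>x::'a::field_char_0. x^(2*(s+1))) =
     (\<Sum>k=0..n. of_int (central_coeff s k) * alt_square_sum (n-k))"
proof -
  have "alt_binom_sum (2*n+1) (n+1) (\<lambda>x::'a. x^(2*(s+1))) =
      (\<Sum>k\<le>s. of_int (central_coeff s k) * (if k \<le> n then alt_square_sum (n-k) else 0))"
    unfolding even_power_eq_sum_central_basis alt_binom_sum_sum[OF finite_atMost]
      alt_binom_sum_central_basis ..
  also have "\<dots> = (\<Sum>k\<le>n+s. of_int (central_coeff s k) * (if k \<le> n then alt_square_sum (n-k) else 0))"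
    by (rule sum.mono_neutral_left) (auto simp: central_coeff_eq_0)
  also have "\<dots> = (\<Sum>k=0..n. of_int (central_coeff s k) * alt_square_sum (n-k))"
    by (rule sum.mono_neutral_cong_right) auto
  finally show ?thesis .
qed

lemma fps_alternating_even_power_sum:
  "Abs_fps (\<lambda>n. of_int (\<Sum>j=0..n+1. (-1) ^ (n + 1 - j) * int ((2*n+1) choose (n+1-j)) * int j ^ (2*(s+1)))
     :: 'a::field_char_0) =
   Abs_fps (\<lambda>k. of_int (central_coeff s k)) * Abs_fps alt_square_sum"
  by (rule fps_ext)
    (simp only: fps_nth_Abs_fps fps_mult_nth alt_binom_sum_eq_int_sum[symmetric] alt_binom_sum_even_power)

definition central_coeff_poly :: "nat \<Rightarrow> int poly" where
  "central_coeff_poly s = (\<Sum>k\<le>s. monom (central_coeff s k) k)"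

lemma coeff_central_coeff_poly: "coeff (central_coeff_poly s) i = central_coeff s i"
  by (cases "i \<le> s") (auto simp: central_coeff_poly_def coeff_sum coeff_monom central_coeff_eq_0)

theorem proposition18p3:
  fixes s :: nat
  assumes "s \<ge> 1"
  shows "\<exists>p :: int poly.
     (\<forall>i. (3::int) dvd coeff p i) \<and> poly p 0 = 0 \<and>
     Abs_fps (\<lambda>n. of_int (\<Sum>j=0..n+1. (-1) ^ (n + 1 - j) * int ((2*n+1) choose (n+1-j)) * int j ^ (2*s)))
       = fps_const (1/2) * (1 + sqrt_1p4z) * (1 + fps_of_poly (map_poly of_int p) :: rat fps)"
proof -
  obtain t where t: "s = t + 1" using assms by (metis add.commute le_Suc_ex)
  define p where "p = central_coeff_poly t - 1"
  have coeff_p: "coeff p i = central_coeff t i - (if i = 0 then 1 else 0)" for i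
    by (simp add: p_def coeff_central_coeff_poly)
  have "Abs_fps (\<lambda>n. of_int (\<Sum>j=0..n+1. (-1) ^ (n + 1 - j) * int ((2*n+1) choose (n+1-j)) * int j ^ (2*s)))
      = Abs_fps (\<lambda>k. of_int (central_coeff t k)) * (fps_const (1/2) * (1 + sqrt_1p4z))"
    unfolding t fps_alternating_even_power_sum half_one_plus_sqrt_1p4z ..
  also have "Abs_fps (\<lambda>k. of_int (central_coeff t k)) = 1 + fps_of_poly (map_poly of_int p)"
    by (rule fps_ext) (simp add: coeff_map_poly coeff_p)
  finally have "Abs_fps (\<lambda>n. of_int (\<Sum>j=0..n+1. (-1) ^ (n + 1 - j) * int ((2*n+1) choose (n+1-j))
      * int j ^ (2*s))) = fps_const (1/2) * (1 + sqrt_1p4z) * (1 + fps_of_poly (map_poly of_int p))"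
    by (simp only: mult.commute)
  moreover have "\<forall>i. (3::int) dvd coeff p i"
    by (simp add: coeff_p central_coeff_0_right three_dvd_central_coeff)
  moreover have "poly p 0 = 0"
    by (simp add: poly_0_coeff_0 coeff_p central_coeff_0_right)
  ultimately show ?thesis by blast
qed

end
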